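(* Let $W_{Y|\mathbf{X}}:\mathcal{X}_1\times\dots\times\mathcal{X}_K\to\mathcal{P}(\mathcal{Y})$ be a discrete memoryless $K$-input multiple-access channel with finite alphabets, cost functions $\phi_k:\mathcal{X}_k\to\mathbb{R}_+$ and cost constraints $\boldsymbol\Phi\in\mathbb{R}_+^K$. If the DI capacity region $\mathsf{C}_{\mathsf{DI}}(W_{Y|\mathbf{X}},\boldsymbol\phi,\boldsymbol\Phi)$ contains a rate tuple $\mathbf{R}$ with $R_k>0$ for all $k\in[K]$, then every sequence $(\mathbf{M}_n)_{n\in\mathbb{N}}$ of code size tuples $\mathbf{M}_n\in\mathbb{N}^K$ is achievable for average-error deterministic identification (DIA) under the constraint $\frac1n\sum_{i=1}^n\boldsymbol\phi(\mathbf{x}_i)\preceq\boldsymbol\Phi$.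
   Context: Notation: $[K]=\{1,\dots,K\}$, $\preceq$ is componentwise $\le$, $\boldsymbol\phi(\mathbf{x})=(\phi_1(x_1),\dots,\phi_K(x_K))$, $W^n_{Y|\mathbf{X}}(y^n|\mathbf{x}^n)=\prod_iW_{Y|\mathbf{X}}(y_i|\mathbf{x}_i)$. An $(\mathbf{M},n)$ DI code is a pair $(\mathbf{f},g)$ with encoders $f_k:[M_k]\to\mathcal{X}_k^n$ and $g:[M_1]\times\dots\times[M_K]\times\mathcal{Y}^n\to\{0,1\}^K$ (components $g_k$); message tuple $\mathbf{m}$ is sent as $\mathbf{f}(\mathbf{m})=(f_1(m_1),\dots,f_K(m_K))$ and $Y^n\sim W^n_{Y|\mathbf{X}}(\cdot|\mathbf{f}(\mathbf{m}))$. Errors: $e_k(\mathbf{m}'|\mathbf{m})=\Pr[g_k(\mathbf{m}',Y^n)\ne\mathbf{1}\{m'_k=m_k\}]$ and $e(\mathbf{m}'|\mathbf{m})=\Pr[\exists k: g_k(\mathbf{m}',Y^n)\ne\mathbf{1}\{m'_k=m_k\}]$. Achievability under the maximal-error criterion: an $(\mathbf{M},n,\boldsymbol\phi,\boldsymbol\Phi,\lambda)$ DI code is an $(\mathbf{M},n)$ DI code whose codeword tuples all satisfy $\frac1n\sum_i\boldsymbol\phi(\mathbf{x}_i)\preceq\boldsymbol\Phi$ and with $e(\mathbf{m}'|\mathbf{m})\le\lambda$ for all $\mathbf{m},\mathbf{m}'$; a rate tuple $\mathbf{R}\in\mathbb{R}_+^K$ is achievable if for every $\lambda>0$ and all large $n$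 such a code exists with $\frac1n\log_2M_k\ge R_k$; $\mathsf{C}_{\mathsf{DI}}$ is the closure of the set of achievable rate tuples. Average-error criterion: for a receiver's tuple $\mathbf{m}'$ and sender $k$, $\bar e_k(\mathbf{m}')$ is the average of $e_k(\mathbf{m}'|\mathbf{m})$ over messages $\mathbf{m}$ with $m_k$ uniform on $[M_k]\setminus\{m'_k\}$ and $m_j$ uniform on $[M_j]$ for $j\ne k$, and $\bar e(\mathbf{m}')=\sum_k\bar e_k(\mathbf{m}')$. An $(\mathbf{M},n,\boldsymbol\phi,\boldsymbol\Phi,\lambda)$ DIA code is an $(\mathbf{M},n)$ DI code satisfying the cost constraint for all codeword tuples, with $e(\mathbf{m}|\mathbf{m})\le\lambda$ for all $\mathbf{m}$ and $\bar e(\mathbf{m}')\le\lambda$ for all $\mathbf{m}'$. A sequence $(\mathbf{M}_n)_{n}$ is achievable if for every $\lambda>0$ and all sufficiently large $n$ there exists an $(\mathbf{M}_n,n,\boldsymbol\phi,\boldsymbol\Phi,\lambda)$ DIA code. *)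

theory Defs
  imports "HOL-Analysis.Analysis" "HOL-Probability.Probability"
begin

text \<open>
  K senders are indexed by a finite type 'k (so K = CARD('k) >= 1).
  Input symbols of all senders live in a common type 'a; sender k uses the finite
  alphabet Xs k.
  Encoder: f k m i = i-th symbol (i < n) of the codeword of message m of sender k.
  Decoder: g m' ys k = g_k(m', y^n).
\<close>

definition msgs :: "('k \<Rightarrow> nat) \<Rightarrow> ('k \<Rightarrow> nat) set" where
  "msgs M = Pi UNIV (\<lambda>k. {1..M k})"

definition out_pmf ::
  "(('k \<Rightarrow> 'a) \<Rightarrow> 'y pmf) \<Rightarrow> nat \<Rightarrow> ('k \<Rightarrow> nat \<Rightarrow> nat \<Rightarrow> 'a) \<Rightarrow> ('k \<Rightarrow> nat) \<Rightarrow> (nat \<Rightarrow> 'y) pmf" where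
  "out_pmf W n f m = Pi_pmf {..<n} undefined (\<lambda>i. W (\<lambda>k. f k (m k) i))"

definition err_k ::
  "(('k \<Rightarrow> 'a) \<Rightarrow> 'y pmf) \<Rightarrow> nat \<Rightarrow> ('k \<Rightarrow> nat \<Rightarrow> nat \<Rightarrow> 'a)
   \<Rightarrow> (('k \<Rightarrow> nat) \<Rightarrow> (nat \<Rightarrow> 'y) \<Rightarrow> 'k \<Rightarrow> bool) \<Rightarrow> 'k \<Rightarrow> ('k \<Rightarrow> nat) \<Rightarrow> ('k \<Rightarrow> nat) \<Rightarrow> real" where
  "err_k W n f g k m' m =
     measure_pmf.prob (out_pmf W n f m) {ys. g m' ys k \<noteq> (m' k = m k)}"

definition err ::
  "(('k \<Rightarrow> 'a) \<Rightarrow> 'y pmf) \<Rightarrow> nat \<Rightarrow> ('k \<Rightarrow> nat \<Rightarrow> nat \<Rightarrow> 'a)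
   \<Rightarrow> (('k \<Rightarrow> nat) \<Rightarrow> (nat \<Rightarrow> 'y) \<Rightarrow> 'k \<Rightarrow> bool) \<Rightarrow> ('k \<Rightarrow> nat) \<Rightarrow> ('k \<Rightarrow> nat) \<Rightarrow> real" where
  "err W n f g m' m =
     measure_pmf.prob (out_pmf W n f m) {ys. \<exists>k. g m' ys k \<noteq> (m' k = m k)}"

definition valid_cost_code ::
  "('k \<Rightarrow> 'a set) \<Rightarrow> ('k \<Rightarrow> 'a \<Rightarrow> real) \<Rightarrow> ('k \<Rightarrow> real) \<Rightarrow> ('k \<Rightarrow> nat) \<Rightarrow> nat
   \<Rightarrow> ('k \<Rightarrow> nat \<Rightarrow> nat \<Rightarrow> 'a) \<Rightarrow> bool" where
  "valid_cost_code Xs \<phi> \<Phi> M n f \<longleftrightarrow>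
     (\<forall>m\<in>msgs M. \<forall>k. (\<forall>i<n. f k (m k) i \<in> Xs k) \<and>
        (1 / real n) * (\<Sum>i<n. \<phi> k (f k (m k) i)) \<le> \<Phi> k)"

definition DI_code ::
  "('k \<Rightarrow> 'a set) \<Rightarrow> (('k \<Rightarrow> 'a) \<Rightarrow> 'y pmf) \<Rightarrow> ('k \<Rightarrow> 'a \<Rightarrow> real) \<Rightarrow> ('k \<Rightarrow> real)
   \<Rightarrow> ('k \<Rightarrow> nat) \<Rightarrow> nat \<Rightarrow> real
   \<Rightarrow> ('k \<Rightarrow> nat \<Rightarrow> nat \<Rightarrow> 'a) \<Rightarrow> (('k \<Rightarrow> nat) \<Rightarrow> (nat \<Rightarrow> 'y) \<Rightarrow> 'k \<Rightarrow> bool) \<Rightarrow> bool" where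
  "DI_code Xs W \<phi> \<Phi> M n lam f g \<longleftrightarrow>
     valid_cost_code Xs \<phi> \<Phi> M n f \<and>
     (\<forall>m\<in>msgs M. \<forall>m'\<in>msgs M. err W n f g m' m \<le> lam)"

definition DI_achievable_rate ::
  "('k \<Rightarrow> 'a set) \<Rightarrow> (('k \<Rightarrow> 'a) \<Rightarrow> 'y pmf) \<Rightarrow> ('k \<Rightarrow> 'a \<Rightarrow> real) \<Rightarrow> ('k \<Rightarrow> real)
   \<Rightarrow> ('k \<Rightarrow> real) \<Rightarrow> bool" where
  "DI_achievable_rate Xs W \<phi> \<Phi> R \<longleftrightarrow>
     (\<forall>k. R k \<ge> 0) \<and>
     (\<forall>lam>0. \<exists>N. \<forall>n\<ge>N. \<exists>M f g. (\<forall>k. M k \<ge> 1) \<and>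
        DI_code Xs W \<phi> \<Phi> M n lam f g \<and> (\<forall>k. log 2 (real (M k)) / real n \<ge> R k))"

definition C_DI ::
  "('k::finite \<Rightarrow> 'a set) \<Rightarrow> (('k \<Rightarrow> 'a) \<Rightarrow> 'y pmf) \<Rightarrow> ('k \<Rightarrow> 'a \<Rightarrow> real) \<Rightarrow> ('k \<Rightarrow> real)
   \<Rightarrow> ('k \<Rightarrow> real) set" where
  "C_DI Xs W \<phi> \<Phi> = closure {R. DI_achievable_rate Xs W \<phi> \<Phi> R}"

text \<open>Average error bar e_k(m'): m_k uniform on [M_k] - {m'_k}, other m_j uniform on [M_j].
  (If the averaging set is empty, i.e. M_k = 1, the value is 0 by the convention x/0 = 0.)\<close>
definition avg_err_k ::
  "(('k \<Rightarrow> 'a) \<Rightarrow> 'y pmf) \<Rightarrow> ('k \<Rightarrow> nat) \<Rightarrow> nat \<Rightarrow> ('k \<Rightarrow> nat \<Rightarrow> nat \<Rightarrow> 'a)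
   \<Rightarrow> (('k \<Rightarrow> nat) \<Rightarrow> (nat \<Rightarrow> 'y) \<Rightarrow> 'k \<Rightarrow> bool) \<Rightarrow> 'k \<Rightarrow> ('k \<Rightarrow> nat) \<Rightarrow> real" where
  "avg_err_k W M n f g k m' =
     (let S = {m\<in>msgs M. m k \<noteq> m' k} in (\<Sum>m\<in>S. err_k W n f g k m' m) / real (card S))"

definition avg_err ::
  "(('k::finite \<Rightarrow> 'a) \<Rightarrow> 'y pmf) \<Rightarrow> ('k \<Rightarrow> nat) \<Rightarrow> nat \<Rightarrow> ('k \<Rightarrow> nat \<Rightarrow> nat \<Rightarrow> 'a)
   \<Rightarrow> (('k \<Rightarrow> nat) \<Rightarrow> (nat \<Rightarrow> 'y) \<Rightarrow> 'k \<Rightarrow> bool) \<Rightarrow> ('k \<Rightarrow> nat) \<Rightarrow> real" where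
  "avg_err W M n f g m' = (\<Sum>k\<in>UNIV. avg_err_k W M n f g k m')"

definition DIA_code ::
  "('k::finite \<Rightarrow> 'a set) \<Rightarrow> (('k \<Rightarrow> 'a) \<Rightarrow> 'y pmf) \<Rightarrow> ('k \<Rightarrow> 'a \<Rightarrow> real) \<Rightarrow> ('k \<Rightarrow> real)
   \<Rightarrow> ('k \<Rightarrow> nat) \<Rightarrow> nat \<Rightarrow> real
   \<Rightarrow> ('k \<Rightarrow> nat \<Rightarrow> nat \<Rightarrow> 'a) \<Rightarrow> (('k \<Rightarrow> nat) \<Rightarrow> (nat \<Rightarrow> 'y) \<Rightarrow> 'k \<Rightarrow> bool) \<Rightarrow> bool" where
  "DIA_code Xs W \<phi> \<Phi> M n lam f g \<longleftrightarrow>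
     valid_cost_code Xs \<phi> \<Phi> M n f \<and>
     (\<forall>m\<in>msgs M. err W n f g m m \<le> lam) \<and>
     (\<forall>m'\<in>msgs M. avg_err W M n f g m' \<le> lam)"

definition DIA_achievable_seq ::
  "('k::finite \<Rightarrow> 'a set) \<Rightarrow> (('k \<Rightarrow> 'a) \<Rightarrow> 'y pmf) \<Rightarrow> ('k \<Rightarrow> 'a \<Rightarrow> real) \<Rightarrow> ('k \<Rightarrow> real)
   \<Rightarrow> (nat \<Rightarrow> 'k \<Rightarrow> nat) \<Rightarrow> bool" where
  "DIA_achievable_seq Xs W \<phi> \<Phi> Ms \<longleftrightarrow>
     (\<forall>lam>0. \<exists>N. \<forall>n\<ge>N. \<exists>f g. DIA_code Xs W \<phi> \<Phi> (Ms n) n lam f g)"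

end

theory Submission
  imports Defs
begin

text \<open>
  Since all rates in the capacity region can be taken positive, for every L and every
  \<delta> > 0 there are DI codes with maximal error \<delta> and at least L messages per sender.
  Cut the message set {1..M_k} of each sender into at most L consecutive blocks, send the
  DI codeword of the block index and let the receiver test the block indices of m'.
  Errors of the first kind are those of the DI code. A wrong message m_k is only
  confused with m'_k when it lies in the block of m'_k, which contains at most a
  fraction 1/L of the wrong messages; elsewhere the DI bound \<delta> applies. Hence the
  average error is at most K (\<delta> + 1/L), whatever the code sizes M_n are. The new
  codewords are codewords of the DI code.
\<close>

lemma open_positive_orthant: "open {x :: 'k::finite \<Rightarrow> real. \<forall>k. 0 < x k}"
proof -
  have "{x :: 'k \<Rightarrow> real. \<forall>k. 0 < x k} = (\<Inter>k. {x. 0 < x k})" by auto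
  then show ?thesis
    by (auto intro!: open_INT open_Collect_less continuous_intros)
qed

lemma C_DI_positive_imp_achievable_positive:
  assumes "\<exists>R\<in>C_DI Xs W \<phi> \<Phi>. \<forall>k. R k > 0"
  obtains R where "DI_achievable_rate Xs W \<phi> \<Phi> R" and "\<forall>k. R k > 0"
proof -
  have "{x. \<forall>k. 0 < x k} \<inter> closure {R. DI_achievable_rate Xs W \<phi> \<Phi> R} \<noteq> {}"
    using assms unfolding C_DI_def by blast
  then have "{x. \<forall>k. 0 < x k} \<inter> {R. DI_achievable_rate Xs W \<phi> \<Phi> R} \<noteq> {}"
    by (simp add: open_Int_closure_eq_empty[OF open_positive_orthant])
  then show ?thesis using that by blast
qed

lemma card_msgs_component_in:
  fixes M :: "'k::finite \<Rightarrow> nat"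
  assumes "A \<subseteq> {1..M k}"
  shows "card {m\<in>msgs M. m k \<in> A} = card A * (\<Prod>j\<in>UNIV-{k}. M j)"
proof -
  have "{m\<in>msgs M. m k \<in> A} = PiE UNIV (\<lambda>j. if j = k then A else {1..M j})"
    using assms unfolding msgs_def PiE_UNIV_domain
    by (auto simp: Pi_def) (metis atLeastAtMost_iff subsetD)
  then have "card {m\<in>msgs M. m k \<in> A} = (\<Prod>j\<in>UNIV. card (if j = k then A else {1..M j}))"
    by (simp add: card_PiE)
  also have "\<dots> = card A * (\<Prod>j\<in>UNIV-{k}. M j)"
    by (subst prod.remove[of UNIV k]) (auto intro!: prod.cong)
  finally show ?thesis .
qed

lemma finite_msgs: "finite (msgs (M :: 'k::finite \<Rightarrow> nat))"
  unfolding msgs_def PiE_UNIV_domain[symmetric] by (simp add: finite_PiE)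

lemma err_k_le_err: "err_k W n f g k m' m \<le> err W n f g m' m"
  unfolding err_k_def err_def by (rule measure_pmf.finite_measure_mono) auto

lemma average_le_of_small_exceptional_set:
  fixes e :: "'a \<Rightarrow> real" and L :: real
  assumes "finite S" "T \<subseteq> S" "L > 0" "L * card T \<le> card S" "\<delta> \<ge> 0"
    and "\<And>x. x \<in> T \<Longrightarrow> e x \<le> 1" and "\<And>x. x \<in> S - T \<Longrightarrow> e x \<le> \<delta>"
  shows "sum e S / card S \<le> \<delta> + 1 / L"
proof (cases "S = {}")
  case False
  then have S: "real (card S) > 0" using assms(1) by (simp add: card_gt_0_iff)
  have "sum e S \<le> (\<Sum>x\<in>S. \<delta> + (if x \<in> T then 1 else 0))"
    using assms(5-7) by (intro sum_mono) fastforce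
  also have "\<dots> = \<delta> * card S + card T"
    using assms(1,2) by (simp add: sum.distrib sum.If_cases Int_absorb1)
  finally have "sum e S / card S \<le> \<delta> + card T / card S"
    using S by (simp add: divide_simps)
  also have "card T / card S \<le> 1 / L"
    using assms(3,4) S by (simp add: divide_simps mult.commute)
  finally show ?thesis by simp
qed (use assms in simp)

text \<open>Blocks have length (M - 1) div L + 1, which is \<lceil>M / L\<rceil> for M \<ge> 1.\<close>

definition block_index :: "nat \<Rightarrow> nat \<Rightarrow> nat \<Rightarrow> nat" where
  "block_index L M v = (v - 1) div ((M - 1) div L + 1) + 1"

lemma block_index_in_range:
  assumes "L \<ge> 1" "v \<in> {1..M}"
  shows "block_index L M v \<in> {1..L}"
proof -
  define B where "B = (M - 1) div L + 1"
  have "M - 1 = L * ((M - 1) div L) + (M - 1) mod L" by simp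
  moreover have "(M - 1) mod L < L" using assms(1) by simp
  moreover have "L * B = L * ((M - 1) div L) + L" unfolding B_def by simp
  ultimately have "M - 1 < L * B" by linarith
  then have "v - 1 < L * B" using assms(2) by (meson atLeastAtMost_iff diff_le_mono le_less_trans)
  then have "(v - 1) div B < L" by (simp add: B_def div_less_iff_less_mult)
  then show ?thesis unfolding block_index_def B_def by simp
qed

lemma card_same_block_le:
  assumes "L \<ge> 1" "a \<in> {1..M}"
  shows "L * card {v\<in>{1..M}. v \<noteq> a \<and> block_index L M v = block_index L M a} \<le> M - 1"
proof -
  define B where "B = (M - 1) div L + 1"
  define c where "c = (a - 1) div B"
  have B: "B > 0" unfolding B_def by simp
  have block: "{v\<in>{1..M}. block_index L M v = block_index L M a} \<subseteq> {c * B + 1..c * B + B}"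
  proof
    fix v assume v: "v \<in> {v\<in>{1..M}. block_index L M v = block_index L M a}"
    then have "(v - 1) div B = c" unfolding block_index_def B_def c_def by simp
    then have "c * B \<le> v - 1" "v - 1 < c * B + B"
      using B div_times_less_eq_dividend[of "v - 1" B] dividend_less_div_times[of B "v - 1"]
      by (auto simp: mult.commute)
    then show "v \<in> {c * B + 1..c * B + B}" using v by auto
  qed
  have "card {v\<in>{1..M}. v \<noteq> a \<and> block_index L M v = block_index L M a}
      \<le> card ({c * B + 1..c * B + B} - {a})"
    using block by (intro card_mono) auto
  also have "\<dots> = B - 1"
    using block assms(2) by (subst card_Diff_singleton) auto
  finally have "L * card {v\<in>{1..M}. v \<noteq> a \<and> block_index L M v = block_index L M a}
      \<le> L * ((M - 1) div L)"
    unfolding B_def by simp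
  also have "\<dots> \<le> M - 1" by simp
  finally show ?thesis .
qed

definition block_msgs :: "nat \<Rightarrow> ('k \<Rightarrow> nat) \<Rightarrow> ('k \<Rightarrow> nat) \<Rightarrow> 'k \<Rightarrow> nat" where
  "block_msgs L M m = (\<lambda>k. block_index L (M k) (m k))"

definition block_encoder ::
  "nat \<Rightarrow> ('k \<Rightarrow> nat) \<Rightarrow> ('k \<Rightarrow> nat \<Rightarrow> nat \<Rightarrow> 'a) \<Rightarrow> 'k \<Rightarrow> nat \<Rightarrow> nat \<Rightarrow> 'a" where
  "block_encoder L M f = (\<lambda>k v. f k (block_index L (M k) v))"

definition block_decoder ::
  "nat \<Rightarrow> ('k \<Rightarrow> nat) \<Rightarrow> (('k \<Rightarrow> nat) \<Rightarrow> (nat \<Rightarrow> 'y) \<Rightarrow> 'k \<Rightarrow> bool)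
   \<Rightarrow> ('k \<Rightarrow> nat) \<Rightarrow> (nat \<Rightarrow> 'y) \<Rightarrow> 'k \<Rightarrow> bool" where
  "block_decoder L M g = (\<lambda>m'. g (block_msgs L M m'))"

lemma block_msgs_in_msgs:
  assumes "L \<ge> 1" "\<And>k. L \<le> Mc k" "m \<in> msgs M"
  shows "block_msgs L M m \<in> msgs Mc"
proof -
  have "block_index L (M k) (m k) \<in> {1..L}" for k
    using assms(3) unfolding msgs_def by (intro block_index_in_range[OF assms(1)]) auto
  then show ?thesis
    using assms(2) unfolding msgs_def block_msgs_def
    by (simp add: Pi_def) (meson atLeastAtMost_iff order_trans)
qed

lemma out_pmf_block_encoder:
  "out_pmf W n (block_encoder L M f) m = out_pmf W n f (block_msgs L M m)"
  by (simp add: out_pmf_def block_encoder_def block_msgs_def)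

lemma err_block_code_diagonal:
  "err W n (block_encoder L M f) (block_decoder L M g) m m
     = err W n f g (block_msgs L M m) (block_msgs L M m)"
  unfolding err_def out_pmf_block_encoder block_decoder_def block_msgs_def by simp

lemma err_k_block_code_different_blocks:
  assumes "m k \<noteq> m' k" "block_index L (M k) (m k) \<noteq> block_index L (M k) (m' k)"
  shows "err_k W n (block_encoder L M f) (block_decoder L M g) k m' m
     = err_k W n f g k (block_msgs L M m') (block_msgs L M m)"
  using assms unfolding err_k_def out_pmf_block_encoder block_decoder_def block_msgs_def by simp

lemma valid_cost_code_block_encoder:
  assumes "valid_cost_code Xs \<phi> \<Phi> Mc n f" "L \<ge> 1" "\<And>k. L \<le> Mc k"
  shows "valid_cost_code Xs \<phi> \<Phi> M n (block_encoder L M f)"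
  unfolding valid_cost_code_def
proof (intro ballI allI)
  fix m k assume "m \<in> msgs M"
  then have "block_msgs L M m \<in> msgs Mc" by (intro block_msgs_in_msgs[OF assms(2,3)])
  then have "(\<forall>i<n. f k (block_msgs L M m k) i \<in> Xs k) \<and>
      1 / real n * (\<Sum>i<n. \<phi> k (f k (block_msgs L M m k) i)) \<le> \<Phi> k"
    using assms(1) unfolding valid_cost_code_def by blast
  then show "(\<forall>i<n. block_encoder L M f k (m k) i \<in> Xs k) \<and>
      1 / real n * (\<Sum>i<n. \<phi> k (block_encoder L M f k (m k) i)) \<le> \<Phi> k"
    by (simp add: block_encoder_def block_msgs_def)
qed

lemma avg_err_k_block_code_le:
  fixes M Mc :: "'k::finite \<Rightarrow> nat"
  assumes DI: "DI_code Xs W \<phi> \<Phi> Mc n \<delta> f g" and "\<delta> \<ge> 0"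
    and L: "L \<ge> 1" and Mc: "\<And>k. L \<le> Mc k" and m': "m' \<in> msgs M"
  shows "avg_err_k W M n (block_encoder L M f) (block_decoder L M g) k m' \<le> \<delta> + 1 / L"
proof -
  define S where "S = {m\<in>msgs M. m k \<noteq> m' k}"
  define C where "C = {v\<in>{1..M k}. v \<noteq> m' k \<and> block_index L (M k) v = block_index L (M k) (m' k)}"
  define T where "T = {m\<in>msgs M. m k \<in> C}"
  define P where "P = (\<Prod>j\<in>UNIV-{k}. M j)"
  have m'k: "m' k \<in> {1..M k}" using m' unfolding msgs_def by auto
  have "S = {m\<in>msgs M. m k \<in> {1..M k} - {m' k}}" unfolding S_def msgs_def by auto
  then have card_S: "card S = (M k - 1) * P"
    using card_msgs_component_in[of "{1..M k} - {m' k}" M k] m'k unfolding P_def by auto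
  have card_T: "card T = card C * P"
    unfolding T_def P_def by (rule card_msgs_component_in) (auto simp: C_def)
  have "L * card C \<le> M k - 1"
    using card_same_block_le[OF L m'k] unfolding C_def .
  then have "L * card T \<le> card S"
    unfolding card_S card_T mult.assoc[symmetric] by (rule mult_right_mono) simp
  then have small: "real L * card T \<le> card S"
    by (metis of_nat_le_iff of_nat_mult)
  have outside: "err_k W n (block_encoder L M f) (block_decoder L M g) k m' m \<le> \<delta>"
    if "m \<in> S - T" for m
  proof -
    have m: "m \<in> msgs M" "m k \<noteq> m' k" "m k \<notin> C" using that unfolding S_def T_def by auto
    then have "block_index L (M k) (m k) \<noteq> block_index L (M k) (m' k)"
      unfolding C_def msgs_def by auto
    with m have "err_k W n (block_encoder L M f) (block_decoder L M g) k m' m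
        = err_k W n f g k (block_msgs L M m') (block_msgs L M m)"
      by (intro err_k_block_code_different_blocks)
    also have "\<dots> \<le> err W n f g (block_msgs L M m') (block_msgs L M m)"
      by (rule err_k_le_err)
    also have "\<dots> \<le> \<delta>"
      using DI block_msgs_in_msgs[where Mc = Mc, OF L Mc m(1)]
        block_msgs_in_msgs[where Mc = Mc, OF L Mc m']
      unfolding DI_code_def by blast
    finally show ?thesis .
  qed
  have "finite S" unfolding S_def by (rule finite_subset[OF _ finite_msgs]) auto
  moreover have "T \<subseteq> S" unfolding S_def T_def C_def by auto
  ultimately show ?thesis
    unfolding avg_err_k_def Let_def S_def[symmetric]
    using L small \<open>\<delta> \<ge> 0\<close> outside
    by (intro average_le_of_small_exceptional_set[where T = T]) (auto simp: err_k_def)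
qed

lemma DIA_code_block_code:
  fixes M Mc :: "'k::finite \<Rightarrow> nat"
  assumes DI: "DI_code Xs W \<phi> \<Phi> Mc n \<delta> f g" and "\<delta> \<ge> 0"
    and L: "L \<ge> 1" and Mc: "\<And>k. L \<le> Mc k"
    and budget: "CARD('k) * (\<delta> + 1 / L) \<le> \<epsilon>"
  shows "DIA_code Xs W \<phi> \<Phi> M n \<epsilon> (block_encoder L M f) (block_decoder L M g)"
  unfolding DIA_code_def
proof (intro conjI ballI)
  show "valid_cost_code Xs \<phi> \<Phi> M n (block_encoder L M f)"
    using DI valid_cost_code_block_encoder[where Mc = Mc, OF _ L Mc]
    unfolding DI_code_def by blast
  have "\<delta> \<le> \<delta> + 1 / L" by simp
  also have "\<dots> \<le> CARD('k) * (\<delta> + 1 / L)"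
    using mult_right_mono[of 1 "real CARD('k)" "\<delta> + 1 / L"] \<open>\<delta> \<ge> 0\<close>
    by (simp add: Suc_le_eq)
  also note budget
  finally have "\<delta> \<le> \<epsilon>" .
  show "err W n (block_encoder L M f) (block_decoder L M g) m m \<le> \<epsilon>" if "m \<in> msgs M" for m
  proof -
    have "err W n (block_encoder L M f) (block_decoder L M g) m m \<le> \<delta>"
      using DI block_msgs_in_msgs[where Mc = Mc, OF L Mc that]
      unfolding err_block_code_diagonal DI_code_def by blast
    with \<open>\<delta> \<le> \<epsilon>\<close> show ?thesis by linarith
  qed
  show "avg_err W M n (block_encoder L M f) (block_decoder L M g) m' \<le> \<epsilon>" if "m' \<in> msgs M" for m'
  proof -
    have "avg_err W M n (block_encoder L M f) (block_decoder L M g) m'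
        \<le> (\<Sum>k\<in>(UNIV::'k set). \<delta> + 1 / L)"
      unfolding avg_err_def
      by (rule sum_mono) (rule avg_err_k_block_code_le[OF DI \<open>\<delta> \<ge> 0\<close> L Mc that])
    then show ?thesis using budget by simp
  qed
qed

lemma DI_achievable_rate_eventually_large_codes:
  fixes R :: "'k::finite \<Rightarrow> real"
  assumes "DI_achievable_rate Xs W \<phi> \<Phi> R" and pos: "\<forall>k. R k > 0" and "\<delta> > 0"
  shows "\<forall>\<^sub>F n in sequentially. \<exists>Mc f g. (\<forall>k. L \<le> Mc k) \<and> DI_code Xs W \<phi> \<Phi> Mc n \<delta> f g"
proof -
  have "\<forall>\<^sub>F n in sequentially. log 2 L \<le> real n * R k" for k
  proof -
    have "\<forall>\<^sub>F n in sequentially. log 2 L / R k \<le> real n"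
      using filterlim_real_sequentially by (simp add: filterlim_at_top)
    then show ?thesis
      by eventually_elim (use pos in \<open>simp add: pos_divide_le_eq\<close>)
  qed
  then have "\<forall>\<^sub>F n in sequentially. \<forall>k. log 2 L \<le> real n * R k"
    by (rule eventually_all_finite)
  moreover have "\<forall>\<^sub>F n in sequentially. \<exists>Mc f g. (\<forall>k. Mc k \<ge> 1) \<and>
      DI_code Xs W \<phi> \<Phi> Mc n \<delta> f g \<and> (\<forall>k. log 2 (real (Mc k)) / real n \<ge> R k)"
    using assms(1) \<open>\<delta> > 0\<close> unfolding DI_achievable_rate_def eventually_sequentially by blast
  moreover have "\<forall>\<^sub>F n in sequentially. n > 0"
    by (rule eventually_gt_at_top)
  ultimately show ?thesis
  proof eventually_elim
    case (elim n)
    then obtain Mc f g where Mc: "\<forall>k. Mc k \<ge> 1" and code: "DI_code Xs W \<phi> \<Phi> Mc n \<delta> f g"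
      and rate: "\<forall>k. log 2 (real (Mc k)) / real n \<ge> R k" by blast
    have "L \<le> Mc k" for k
    proof (cases "L = 0")
      case False
      have "log 2 L \<le> real n * R k" using elim(1) by blast
      also have "\<dots> \<le> log 2 (Mc k)"
        using rate elim(3) by (simp add: pos_le_divide_eq mult.commute)
      finally have "log 2 L \<le> log 2 (Mc k)" .
      moreover have "0 < real L" "0 < real (Mc k)" using False Mc by (auto simp: Suc_le_eq)
      ultimately show ?thesis by simp
    qed simp
    with code show ?case by blast
  qed
qed

lemma error_budget_split:
  fixes K \<epsilon> :: real
  assumes "K > 0" "\<epsilon> > 0"
  obtains \<delta> and L :: nat where "\<delta> > 0" "L \<ge> 1" "K * (\<delta> + 1 / L) \<le> \<epsilon>"
proof
  define L where "L = nat \<lceil>2 * K / \<epsilon>\<rceil>"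
  have L: "2 * K / \<epsilon> \<le> L" unfolding L_def by linarith
  moreover have "0 < 2 * K / \<epsilon>" using assms by simp
  ultimately show L1: "L \<ge> 1" by linarith
  show "\<epsilon> / (2 * K) > 0" using assms by simp
  have "1 / L \<le> \<epsilon> / (2 * K)"
    using L L1 assms by (simp add: field_simps)
  then have "K * (1 / L) \<le> \<epsilon> / 2"
    using mult_left_mono[of "1 / L" "\<epsilon> / (2 * K)" K] assms by simp
  moreover have "K * (\<epsilon> / (2 * K) + 1 / L) = \<epsilon> / 2 + K * (1 / L)"
    using assms by (simp add: distrib_left)
  ultimately show "K * (\<epsilon> / (2 * K) + 1 / L) \<le> \<epsilon>" by linarith
qed

theorem theorem3:
  fixes Xs :: "'k::finite \<Rightarrow> 'a set"
    and W :: "('k \<Rightarrow> 'a) \<Rightarrow> 'y::finite pmf"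
    and \<phi> :: "'k \<Rightarrow> 'a \<Rightarrow> real"
    and \<Phi> :: "'k \<Rightarrow> real"
    and Ms :: "nat \<Rightarrow> 'k \<Rightarrow> nat"
  assumes "\<And>k. finite (Xs k)" and "\<And>k. Xs k \<noteq> {}"
    and "\<And>k x. x \<in> Xs k \<Longrightarrow> \<phi> k x \<ge> 0"
    and "\<And>k. \<Phi> k \<ge> 0"
    and "\<exists>R\<in>C_DI Xs W \<phi> \<Phi>. \<forall>k. R k > 0"
  shows "DIA_achievable_seq Xs W \<phi> \<Phi> Ms"
  unfolding DIA_achievable_seq_def
proof (intro allI impI)
  fix \<epsilon> :: real
  assume "\<epsilon> > 0"
  obtain R where R: "DI_achievable_rate Xs W \<phi> \<Phi> R" "\<forall>k. R k > 0"
    using C_DI_positive_imp_achievable_positive[OF assms(5)] .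
  obtain \<delta> and L :: nat where "\<delta> > 0" "L \<ge> 1" and budget: "CARD('k) * (\<delta> + 1 / L) \<le> \<epsilon>"
    using error_budget_split[of "CARD('k)" \<epsilon>] \<open>\<epsilon> > 0\<close> by auto
  have "\<forall>\<^sub>F n in sequentially. \<exists>Mc f g. (\<forall>k. L \<le> Mc k) \<and> DI_code Xs W \<phi> \<Phi> Mc n \<delta> f g"
    using DI_achievable_rate_eventually_large_codes[OF R \<open>\<delta> > 0\<close>] .
  then have "\<forall>\<^sub>F n in sequentially. \<exists>f g. DIA_code Xs W \<phi> \<Phi> (Ms n) n \<epsilon> f g"
  proof eventually_elim
    case (elim n)
    then obtain Mc f g where "\<forall>k. L \<le> Mc k" "DI_code Xs W \<phi> \<Phi> Mc n \<delta> f g" by blast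
    then show ?case
      using DIA_code_block_code[of Xs W \<phi> \<Phi> Mc n \<delta> f g L \<epsilon> "Ms n"] \<open>\<delta> > 0\<close> \<open>L \<ge> 1\<close> budget
      by auto
  qed
  then show "\<exists>N. \<forall>n\<ge>N. \<exists>f g. DIA_code Xs W \<phi> \<Phi> (Ms n) n \<epsilon> f g"
    by (simp add: eventually_sequentially)
qed

end
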